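(* There exist absolute constants $q_0$ and $C>0$ such that the following holds. Let $q\geq q_0$ be an integer, let $r$ be an integer with $1\leq r\leq\exp(q^{1/3})$, let $\delta\in\mathbb{N}$ with $\delta\leq\frac{\log q}{\log2}$, and let $n$ be a positive integer. Put $H_r:=\sum_{d=1}^r\frac1d$. Then \[ \frac{1}{n!}\sum_{\pi\in S_n}\left(\sum_{d=1}^r c_d(\pi^q)\right)^{\delta}\leq \begin{cases} C\,\sigma_0(q)H_r & \text{if }\delta=1,\\ C\left(\sigma_0(q)^2H_r^2+\sigma_1(q)H_r\right) & \text{if }\delta=2,\\ C\,q^2H_r & \text{if }\delta=3,\\ C\,q^{\delta-1}H_r^2 & \text{if }\delta\geq4. \end{cases} \]
   Context: For a permutation $\sigma\in S_n$ and $d\geq1$, $c_d(\sigma)$ is the number of $d$-cycles of $\sigma$ (zero if $d>n$). For real $\alpha$, $\sigma_\alpha(q)=\sum_{d\mid q}d^\alpha$. $\mathbb{N}$ denotes the positive integers. *)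

theory Defs
  imports Complex_Main "HOL-Combinatorics.Permutations" "HOL-Combinatorics.Orbits"
begin

text \<open>Permutations of S_n are modelled as permutations of {..<n}.\<close>
definition cycle_count :: "nat \<Rightarrow> (nat \<Rightarrow> nat) \<Rightarrow> nat \<Rightarrow> nat" where
  "cycle_count n \<sigma> d = card {orbit \<sigma> x | x. x < n \<and> card (orbit \<sigma> x) = d}"

definition divisor_sigma :: "real \<Rightarrow> nat \<Rightarrow> real" where
  "divisor_sigma \<alpha> q = (\<Sum>d\<in>{d. d dvd q}. real d powr \<alpha>)"

definition harmonic_num :: "nat \<Rightarrow> real" where
  "harmonic_num r = (\<Sum>d=1..r. 1 / real d)"

end

theory Submission
  imports Defs "HOL-Combinatorics.Cycles" "HOL-Computational_Algebra.Primes"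
    "HOL-Analysis.Harmonic_Numbers"
begin

text \<open>Write \<open>X(\<pi>) = \<Sum>\<^bsub>d\<le>r\<^esub> c\<^sub>d(\<pi>\<^sup>q)\<close>. A cycle of \<open>\<pi>\<close> of length \<open>L\<close> splits into
  \<open>gcd L q\<close> cycles of \<open>\<pi>\<^sup>q\<close> of length \<open>L / gcd L q\<close>, so \<open>X\<close> is an additive cycle
  statistic \<open>X(\<pi>) = \<Sum>\<^sub>x G(|cycle of x|)\<close>. Conditioning on the cycle through one point,
  whose length is uniform on \<open>{1..n}\<close>, gives a recursion for the moments of \<open>X\<close> of
  moment-cumulant type, in which the role of the cumulants is played by
  \<open>\<Sum>\<^sub>L G(L) (L G(L))\<^sup>j \<le> H\<^sub>r \<sigma>\<^sub>j(q)\<close>. So \<open>E X\<^sup>\<delta>\<close> is at most the \<open>\<delta>\<close>-th moment with these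
  cumulants. For \<open>\<delta> \<le> 3\<close> this is explicit. For larger \<open>\<delta>\<close>, the bounds
  \<open>\<sigma>\<^sub>0(q) \<le> 256 q\<^sup>1\<^sup>/\<^sup>3\<close>, \<open>\<sigma>\<^sub>j(q) \<le> 2 q\<^sup>j\<close> (\<open>j \<ge> 2\<close>) and \<open>H\<^sub>r \<le> 2 q\<^sup>1\<^sup>/\<^sup>3\<close> make all cumulants
  small relative to \<open>q\<^sup>j\<^sup>+\<^sup>1\<close>, and an explicit majorant is stable under the recursion.\<close>

section \<open>Additive cycle statistics\<close>

definition cycle_stat :: "(nat \<Rightarrow> real) \<Rightarrow> 'a set \<Rightarrow> ('a \<Rightarrow> 'a) \<Rightarrow> real" where
  "cycle_stat G S p = (\<Sum>x\<in>S. G (card (orbit p x)))"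

definition cycle_weight :: "(nat \<Rightarrow> real) \<Rightarrow> nat \<Rightarrow> real" where
  "cycle_weight G L = real L * G L"

lemma orbit_eq_if_in_orbit:
  "permutation p \<Longrightarrow> y \<in> orbit p x \<Longrightarrow> orbit p y = orbit p x"
  by (metis cyclic_on_orbit' orbit_cyclic_eq3)

lemma card_orbit_conj_transpose:
  assumes "permutation p"
  shows "card (orbit (Transposition.transpose b c \<circ> p \<circ> Transposition.transpose b c)
                 (Transposition.transpose b c x)) = card (orbit p x)"
proof -
  let ?t = "Transposition.transpose b c"
  have "orbit (?t \<circ> p \<circ> ?t) (?t x) = ?t ` orbit p x"
    by (rule orbit_inverse[symmetric]) (auto simp: permutation_self_in_orbit[OF assms])
  then show ?thesis
    by (simp add: card_image inj_on_subset[OF inj_transpose])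
qed

lemma cycle_stat_conj_transpose:
  assumes "p permutes S" "finite S" "b \<in> S" "c \<in> S"
  shows "cycle_stat G S (Transposition.transpose b c \<circ> p \<circ> Transposition.transpose b c)
       = cycle_stat G S p"
proof -
  let ?t = "Transposition.transpose b c"
  have "bij_betw ?t S S"
    using assms(3,4) by (intro permutes_imp_bij permutes_swap_id)
  then have "cycle_stat G S (?t \<circ> p \<circ> ?t) = (\<Sum>x\<in>S. G (card (orbit (?t \<circ> p \<circ> ?t) (?t x))))"
    unfolding cycle_stat_def by (rule sum.reindex_bij_betw[symmetric])
  also have "\<dots> = cycle_stat G S p"
  proof -
    have "permutation p" using assms(1,2) permutation_permutes by blast
    then show ?thesis by (simp add: cycle_stat_def card_orbit_conj_transpose)
  qed
  finally show ?thesis .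
qed

lemma sum_permutes_cycle_through_swap:
  assumes "finite S" "b \<in> S" "c \<in> S"
  shows "(\<Sum>p | p permutes S. \<Phi> (card (orbit p b)) (cycle_stat G S p))
       = (\<Sum>p | p permutes S. \<Phi> (card (orbit p c)) (cycle_stat G S p))"
proof -
  let ?t = "Transposition.transpose b c"
  let ?h = "\<lambda>p. ?t \<circ> p \<circ> ?t"
  have h_perm: "?h p permutes S" if "p permutes S" for p
    using that assms(2,3) by (intro permutes_compose permutes_swap_id) auto
  have "card (orbit (?h p) c) = card (orbit p b)" if "p permutes S" for p
  proof -
    have "permutation p" using that assms(1) permutation_permutes by blast
    from card_orbit_conj_transpose[OF this, of b c b] show ?thesis by simp
  qed
  then show ?thesis
    using h_perm cycle_stat_conj_transpose[OF _ assms]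
    by (intro sum.reindex_bij_witness[of _ ?h ?h]) (auto simp: fun_eq_iff)
qed

lemma transpose_comp_insert_apply:
  assumes "a \<notin> S" "p permutes S" "b \<in> S"
  shows "(Transposition.transpose a b \<circ> p) a = b"
    and "y \<in> S \<Longrightarrow> (Transposition.transpose a b \<circ> p) y = (if p y = b then a else p y)"
  using permutes_not_in[OF assms(2,1)] permutes_in_image[OF assms(2)] assms(1)
  by (auto simp: Transposition.transpose_def)

lemma orbit_transpose_comp_insert:
  assumes "finite S" "a \<notin> S" "p permutes S" "b \<in> S"
  shows "orbit (Transposition.transpose a b \<circ> p) a = insert a (orbit p b)"
proof -
  let ?\<pi> = "Transposition.transpose a b \<circ> p"
  note \<pi>_a = transpose_comp_insert_apply(1)[OF assms(2-4)]
  note \<pi>_S = transpose_comp_insert_apply(2)[OF assms(2-4)]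
  have p: "permutation p" using assms(1,3) permutation_permutes by blast
  have orbit_S: "orbit p b \<subseteq> S" using assms(3,4) by (rule permutes_orbit_subset)
  have b_orbit: "b \<in> orbit p b" by (rule permutation_self_in_orbit[OF p])
  have "orbit ?\<pi> a \<subseteq> insert a (orbit p b)"
  proof
    fix y assume "y \<in> orbit ?\<pi> a"
    then show "y \<in> insert a (orbit p b)"
    proof induction
      case (step y)
      show ?case
      proof (cases "y = a")
        case False
        then have "y \<in> orbit p b" using step.IH by simp
        moreover from this have "y \<in> S" using orbit_S by blast
        ultimately show ?thesis using \<pi>_S[of y] orbit.step[of y p b] by auto
      qed (use \<pi>_a b_orbit in simp)
    qed (use \<pi>_a b_orbit in simp)
  qed
  moreover have b_\<pi>: "b \<in> orbit ?\<pi> a" using \<pi>_a by (metis orbit.base)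
  have "orbit p b \<subseteq> orbit ?\<pi> a"
  proof
    fix y assume "y \<in> orbit p b"
    then show "y \<in> orbit ?\<pi> a"
    proof induction
      case base
      then show ?case using b_\<pi> \<pi>_S[OF assms(4)] by (metis orbit.step)
    next
      case (step y)
      then show ?case using b_\<pi> \<pi>_S[of y] orbit_S by (metis orbit.step subsetD)
    qed
  qed
  moreover have "a \<in> orbit ?\<pi> a"
    using permutation_self_in_orbit[OF permutation_compose[OF permutation_swap_id p]] by simp
  ultimately show ?thesis by blast
qed

lemma orbit_transpose_comp_outside:
  assumes "finite S" "a \<notin> S" "p permutes S" "b \<in> S" "x \<in> S" "x \<notin> orbit p b"
  shows "orbit (Transposition.transpose a b \<circ> p) x = orbit p x"
proof (rule orbit_cong)
  have p: "permutation p" using assms(1,3) permutation_permutes by blast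
  show "x \<in> orbit p x" by (rule permutation_self_in_orbit[OF p])
  fix s assume s: "s \<in> orbit p x"
  have "p s \<noteq> b"
  proof
    assume "p s = b"
    then have "orbit p b = orbit p x"
      using s by (metis orbit.step orbit_eq_if_in_orbit[OF p])
    then show False using assms(6) permutation_self_in_orbit[OF p, of x] by simp
  qed
  moreover have "s \<in> S" using s permutes_orbit_subset[OF assms(3,5)] by auto
  ultimately show "(Transposition.transpose a b \<circ> p) s = p s"
    using transpose_comp_insert_apply(2)[OF assms(2-4)] by simp
qed

text \<open>Inserting a new point \<open>a\<close> after \<open>b\<close> in the cycle of \<open>b\<close> lengthens that
  cycle by one and changes the statistic only through the weight of this cycle.\<close>
lemma cycle_stat_transpose_insert:
  assumes "finite S" "a \<notin> S" "p permutes S" "b \<in> S"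
  defines "\<pi> \<equiv> Transposition.transpose a b \<circ> p"
  shows "card (orbit \<pi> a) = Suc (card (orbit p b))"
    and "cycle_stat G (insert a S) \<pi> - cycle_weight G (card (orbit \<pi> a))
       = cycle_stat G S p - cycle_weight G (card (orbit p b))"
proof -
  have p: "permutation p" using assms(1,3) permutation_permutes by blast
  then have "permutation \<pi>"
    unfolding \<pi>_def by (intro permutation_compose permutation_swap_id)
  have orbit_a: "orbit \<pi> a = insert a (orbit p b)"
    unfolding \<pi>_def by (rule orbit_transpose_comp_insert[OF assms(1-4)])
  then have orbit_O: "orbit \<pi> x = insert a (orbit p b)" if "x \<in> orbit p b" for x
    using that orbit_eq_if_in_orbit[OF \<open>permutation \<pi>\<close>] by blast
  note orbit_outside = orbit_transpose_comp_outside[OF assms(1-4), folded \<pi>_def]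
  let ?O = "orbit p b" and ?c = "card (orbit p b)"
  let ?R = "\<Sum>x\<in>S - ?O. G (card (orbit p x))"
  have O_S: "?O \<subseteq> S" using assms(3,4) by (rule permutes_orbit_subset)
  moreover have "a \<notin> ?O" using O_S assms(2) by auto
  moreover have "finite ?O" using O_S assms(1) by (rule finite_subset)
  ultimately show card_a: "card (orbit \<pi> a) = Suc ?c"
    unfolding orbit_a by simp
  have "cycle_stat G (insert a S) \<pi>
      = G (Suc ?c) + (\<Sum>x\<in>S - ?O. G (card (orbit \<pi> x))) + (\<Sum>x\<in>?O. G (card (orbit \<pi> x)))"
    unfolding cycle_stat_def using assms(1,2) card_a sum.subset_diff[OF O_S assms(1)] by simp
  also have "\<dots> = G (Suc ?c) + ?R + real ?c * G (Suc ?c)"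
    using orbit_O orbit_outside card_a orbit_a by simp
  finally have "cycle_stat G (insert a S) \<pi> = G (Suc ?c) + ?R + real ?c * G (Suc ?c)" .
  moreover have "cycle_stat G S p = ?R + real ?c * G ?c"
    unfolding cycle_stat_def sum.subset_diff[OF O_S assms(1)]
    using orbit_eq_if_in_orbit[OF p] by simp
  ultimately show "cycle_stat G (insert a S) \<pi> - cycle_weight G (card (orbit \<pi> a))
       = cycle_stat G S p - cycle_weight G ?c"
    unfolding card_a cycle_weight_def by (simp add: algebra_simps)
qed

lemma cycle_stat_insert_fixpoint:
  assumes "finite S" "a \<notin> S" "p permutes S"
  shows "card (orbit p a) = 1"
    and "cycle_stat G (insert a S) p - cycle_weight G (card (orbit p a)) = cycle_stat G S p"
proof -
  have "orbit p a = {a}"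
    using permutes_not_in[OF assms(3,2)] by (simp add: orbit_eq_singleton_iff)
  then show card_a: "card (orbit p a) = 1" by simp
  show "cycle_stat G (insert a S) p - cycle_weight G (card (orbit p a)) = cycle_stat G S p"
    unfolding cycle_stat_def cycle_weight_def card_a using assms(1,2) card_a by simp
qed

definition perm_sum :: "(nat \<Rightarrow> real) \<Rightarrow> nat \<Rightarrow> (real \<Rightarrow> real) \<Rightarrow> real" where
  "perm_sum G m \<phi> = (\<Sum>p | p permutes {..<m}. \<phi> (cycle_stat G {..<m} p))"

definition pointed_perm_sum :: "(nat \<Rightarrow> real) \<Rightarrow> nat \<Rightarrow> (nat \<Rightarrow> real \<Rightarrow> real) \<Rightarrow> real" where
  "pointed_perm_sum G m F = (\<Sum>p | p permutes {..<Suc m}.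
      F (card (orbit p m)) (cycle_stat G {..<Suc m} p - cycle_weight G (card (orbit p m))))"

lemma pointed_perm_sum_insert:
  "pointed_perm_sum G m F = perm_sum G m (F 1) + (\<Sum>b<m. \<Sum>p | p permutes {..<m}.
       F (Suc (card (orbit p b))) (cycle_stat G {..<m} p - cycle_weight G (card (orbit p b))))"
proof -
  let ?t = Transposition.transpose
  let ?f = "\<lambda>p. F (card (orbit p m))
                  (cycle_stat G (insert m {..<m}) p - cycle_weight G (card (orbit p m)))"
  have "pointed_perm_sum G m F = sum ?f {p. p permutes insert m {..<m}}"
    by (simp add: pointed_perm_sum_def lessThan_Suc)
  also have "\<dots> = (\<Sum>b\<in>insert m {..<m}. \<Sum>p | p permutes {..<m}. ?f (?t m b \<circ> p))"
    by (rule sum_over_permutations_insert) auto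
  also have "\<dots> = (\<Sum>p | p permutes {..<m}. ?f p) + (\<Sum>b<m. \<Sum>p | p permutes {..<m}. ?f (?t m b \<circ> p))"
    by simp
  also have "(\<Sum>p | p permutes {..<m}. ?f p) = perm_sum G m (F 1)"
    unfolding perm_sum_def using cycle_stat_insert_fixpoint[of "{..<m}" m] by (intro sum.cong) auto
  also have "(\<Sum>b<m. \<Sum>p | p permutes {..<m}. ?f (?t m b \<circ> p)) = (\<Sum>b<m. \<Sum>p | p permutes {..<m}.
       F (Suc (card (orbit p b))) (cycle_stat G {..<m} p - cycle_weight G (card (orbit p b))))"
    using cycle_stat_transpose_insert[of "{..<m}" m] by (intro sum.cong) auto
  finally show ?thesis .
qed

lemma pointed_perm_sum_Suc:
  "pointed_perm_sum G (Suc m) F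
     = perm_sum G (Suc m) (F 1) + real (Suc m) * pointed_perm_sum G m (\<lambda>L. F (Suc L))"
proof -
  have "(\<Sum>p | p permutes {..<Suc m}.
       F (Suc (card (orbit p b))) (cycle_stat G {..<Suc m} p - cycle_weight G (card (orbit p b))))
     = pointed_perm_sum G m (\<lambda>L. F (Suc L))" if "b < Suc m" for b
    unfolding pointed_perm_sum_def using that
    by (intro sum_permutes_cycle_through_swap[where \<Phi> = "\<lambda>L y. F (Suc L) (y - cycle_weight G L)"]) auto
  then show ?thesis
    by (simp add: pointed_perm_sum_insert[of G "Suc m"])
qed

text \<open>The point \<open>m\<close> lies on a cycle of length \<open>i + 1\<close> with probability
  \<open>1 / (m + 1)\<close> for each \<open>i \<le> m\<close>, and the permutation induced on the other
  \<open>m - i\<close> points is then uniformly distributed.\<close>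
lemma pointed_perm_sum_average:
  "pointed_perm_sum G m F / fact m = (\<Sum>i\<le>m. perm_sum G (m - i) (F (Suc i)) / fact (m - i))"
proof (induction m arbitrary: F)
  case 0
  then show ?case by (simp add: pointed_perm_sum_insert[of G 0])
next
  case (Suc m)
  have "pointed_perm_sum G (Suc m) F / fact (Suc m)
      = perm_sum G (Suc m) (F 1) / fact (Suc m) + pointed_perm_sum G m (\<lambda>L. F (Suc L)) / fact m"
    unfolding pointed_perm_sum_Suc by (simp add: add_divide_distrib)
  then show ?case
    unfolding Suc.IH sum.atMost_Suc_shift by simp
qed

lemma perm_sum_power_Suc:
  "perm_sum G (Suc m) (\<lambda>y. y ^ Suc k)
     = real (Suc m) * pointed_perm_sum G m (\<lambda>L y. G L * (cycle_weight G L + y) ^ k)"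
proof -
  let ?P = "{p. p permutes {..<Suc m}}"
  have "perm_sum G (Suc m) (\<lambda>y. y ^ Suc k)
      = (\<Sum>p\<in>?P. \<Sum>x<Suc m. G (card (orbit p x)) * cycle_stat G {..<Suc m} p ^ k)"
    unfolding perm_sum_def
    by (intro sum.cong refl) (simp add: cycle_stat_def sum_distrib_right[symmetric] mult.commute)
  also have "\<dots> = (\<Sum>x<Suc m. \<Sum>p\<in>?P. G (card (orbit p x)) * cycle_stat G {..<Suc m} p ^ k)"
    by (rule sum.swap)
  also have "\<dots> = (\<Sum>x<Suc m. \<Sum>p\<in>?P. G (card (orbit p m)) * cycle_stat G {..<Suc m} p ^ k)"
    by (intro sum.cong refl sum_permutes_cycle_through_swap[where \<Phi> = "\<lambda>L y. G L * y ^ k"]) auto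
  also have "\<dots> = real (Suc m) * pointed_perm_sum G m (\<lambda>L y. G L * (cycle_weight G L + y) ^ k)"
    unfolding pointed_perm_sum_def by simp
  finally show ?thesis .
qed

lemma perm_sum_sum: "perm_sum G n (\<lambda>y. \<Sum>j\<in>J. f j y) = (\<Sum>j\<in>J. perm_sum G n (f j))"
  unfolding perm_sum_def by (rule sum.swap)

lemma perm_sum_cmult: "perm_sum G n (\<lambda>y. c * f y) = c * perm_sum G n f"
  unfolding perm_sum_def by (simp add: sum_distrib_left)

definition stat_moment :: "(nat \<Rightarrow> real) \<Rightarrow> nat \<Rightarrow> nat \<Rightarrow> real" where
  "stat_moment G n k = perm_sum G n (\<lambda>y. y ^ k) / fact n"

lemma stat_moment_0 [simp]: "stat_moment G n 0 = 1"
  unfolding stat_moment_def perm_sum_def using card_permutations[of "{..<n}" n] by simp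

lemma stat_moment_empty [simp]: "stat_moment G 0 (Suc k) = 0"
  unfolding stat_moment_def perm_sum_def cycle_stat_def by simp

lemma stat_moment_Suc_Suc:
  "stat_moment G (Suc m) (Suc k) = (\<Sum>i\<le>m. G (Suc i) *
      (\<Sum>j\<le>k. real (k choose j) * cycle_weight G (Suc i) ^ j * stat_moment G (m - i) (k - j)))"
proof -
  have "stat_moment G (Suc m) (Suc k)
      = pointed_perm_sum G m (\<lambda>L y. G L * (cycle_weight G L + y) ^ k) / fact m"
    unfolding stat_moment_def perm_sum_power_Suc by simp
  also have "\<dots> = (\<Sum>i\<le>m. perm_sum G (m - i)
                     (\<lambda>y. G (Suc i) * (cycle_weight G (Suc i) + y) ^ k) / fact (m - i))"
    by (rule pointed_perm_sum_average)
  also have "\<dots> = (\<Sum>i\<le>m. G (Suc i) *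
      (\<Sum>j\<le>k. real (k choose j) * cycle_weight G (Suc i) ^ j * stat_moment G (m - i) (k - j)))"
  proof (intro sum.cong refl)
    fix i
    let ?w = "cycle_weight G (Suc i)"
    let ?c = "\<lambda>j. G (Suc i) * (real (k choose j) * ?w ^ j)"
    have "perm_sum G (m - i) (\<lambda>y. G (Suc i) * (?w + y) ^ k)
        = perm_sum G (m - i) (\<lambda>y. \<Sum>j\<le>k. ?c j * y ^ (k - j))"
      unfolding binomial_ring by (simp add: sum_distrib_left mult_ac)
    also have "\<dots> = (\<Sum>j\<le>k. ?c j * perm_sum G (m - i) (\<lambda>y. y ^ (k - j)))"
      by (simp only: perm_sum_sum perm_sum_cmult)
    finally show "perm_sum G (m - i) (\<lambda>y. G (Suc i) * (?w + y) ^ k) / fact (m - i)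
        = G (Suc i) * (\<Sum>j\<le>k. real (k choose j) * ?w ^ j * stat_moment G (m - i) (k - j))"
      by (simp add: stat_moment_def sum_divide_distrib sum_distrib_left mult_ac)
  qed
  finally show ?thesis .
qed

section \<open>The moment-cumulant recursion\<close>

text \<open>\<open>\<kappa> j\<close> is the cumulant of order \<open>j + 1\<close>.\<close>
fun moment_of_cumulants :: "(nat \<Rightarrow> real) \<Rightarrow> nat \<Rightarrow> real" where
  "moment_of_cumulants \<kappa> 0 = 1"
| "moment_of_cumulants \<kappa> (Suc k) =
     (\<Sum>j\<le>k. real (k choose j) * \<kappa> j * moment_of_cumulants \<kappa> (k - j))"

lemma moment_of_cumulants_nonneg:
  assumes "\<And>j. 0 \<le> \<kappa> j"
  shows "0 \<le> moment_of_cumulants \<kappa> k"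
proof (induction k rule: less_induct)
  case (less k)
  then show ?case
    using assms by (cases k) (auto intro!: sum_nonneg mult_nonneg_nonneg)
qed

text \<open>By \<open>stat_moment_Suc_Suc\<close>, the moments of the statistic obey the moment-cumulant
  recursion with the partial sums of \<open>\<kappa>_bound\<close> in place of the cumulants.\<close>
lemma stat_moment_le_moment_of_cumulants:
  assumes G_nonneg: "\<And>L. 0 \<le> G L"
    and \<kappa>_bound: "\<And>m j. (\<Sum>i\<le>m. G (Suc i) * cycle_weight G (Suc i) ^ j) \<le> \<kappa> j"
  shows "stat_moment G n k \<le> moment_of_cumulants \<kappa> k"
proof (induction k arbitrary: n rule: less_induct)
  case (less k)
  have w_nonneg: "0 \<le> cycle_weight G L" for L
    unfolding cycle_weight_def using G_nonneg by simp
  have \<kappa>_nonneg: "0 \<le> \<kappa> j" for j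
  proof -
    have "0 \<le> G 1 * cycle_weight G 1 ^ j" using G_nonneg w_nonneg by simp
    also have "\<dots> \<le> \<kappa> j" using \<kappa>_bound[where m = 0 and j = j] by simp
    finally show ?thesis .
  qed
  show ?case
  proof (cases k)
    case (Suc k')
    show ?thesis
    proof (cases n)
      case 0
      have "0 \<le> moment_of_cumulants \<kappa> k"
        by (rule moment_of_cumulants_nonneg[OF \<kappa>_nonneg])
      with 0 Suc show ?thesis by simp
    next
      case (Suc m)
      have "stat_moment G n k = (\<Sum>i\<le>m. G (Suc i) * (\<Sum>j\<le>k'.
          real (k' choose j) * cycle_weight G (Suc i) ^ j * stat_moment G (m - i) (k' - j)))"
        using Suc \<open>k = Suc k'\<close> stat_moment_Suc_Suc by simp
      also have "\<dots> \<le> (\<Sum>i\<le>m. G (Suc i) * (\<Sum>j\<le>k'.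
          real (k' choose j) * cycle_weight G (Suc i) ^ j * moment_of_cumulants \<kappa> (k' - j)))"
        using less.IH \<open>k = Suc k'\<close> G_nonneg w_nonneg by (intro sum_mono mult_left_mono) auto
      also have "\<dots> = (\<Sum>j\<le>k'. real (k' choose j) * moment_of_cumulants \<kappa> (k' - j)
                       * (\<Sum>i\<le>m. G (Suc i) * cycle_weight G (Suc i) ^ j))"
        unfolding sum_distrib_left sum_distrib_right by (subst sum.swap) (simp add: mult_ac)
      also have "\<dots> \<le> (\<Sum>j\<le>k'. real (k' choose j) * moment_of_cumulants \<kappa> (k' - j) * \<kappa> j)"
        using moment_of_cumulants_nonneg[of \<kappa>, OF \<kappa>_nonneg] \<kappa>_bound
        by (intro sum_mono mult_left_mono) auto
      also have "\<dots> = moment_of_cumulants \<kappa> k"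
        using \<open>k = Suc k'\<close> by (simp add: mult_ac)
      finally show ?thesis .
    qed
  qed simp
qed

lemma epsilon_power_step:
  fixes \<alpha> c :: real
  assumes "0 \<le> \<alpha>" "0 \<le> c" "k \<le> K" "\<epsilon> = \<alpha> + sqrt (real K * \<alpha>)"
  shows "\<alpha> * (c + \<epsilon>) ^ k + \<alpha> * real k * (c + \<epsilon>) ^ (k - 1) \<le> \<epsilon> * (c + \<epsilon>) ^ k"
proof -
  define s where "s = sqrt (real K * \<alpha>)"
  have s: "0 \<le> s" "s * s = real K * \<alpha>" and \<epsilon>: "\<epsilon> = \<alpha> + s"
    unfolding s_def using assms(1,4) by simp_all
  have "\<alpha> * real k \<le> \<alpha> * real K" using assms(1,3) by (intro mult_left_mono) auto
  also have "\<dots> = s * s" using s(2) by simp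
  also have "\<dots> \<le> s * \<epsilon>" using s(1) \<epsilon> assms(1) by (intro mult_left_mono) auto
  finally have "\<alpha> * real k \<le> s * \<epsilon>" .
  moreover have "\<alpha> * c \<le> \<epsilon> * c" using assms(1,2) \<epsilon> s(1) by (intro mult_right_mono) auto
  moreover have "\<epsilon> * (c + \<epsilon>) = \<epsilon> * c + \<alpha> * \<epsilon> + s * \<epsilon>" using \<epsilon> by (simp add: algebra_simps)
  ultimately have step: "(c + \<epsilon>) * \<alpha> + \<alpha> * real k \<le> \<epsilon> * (c + \<epsilon>)"
    by (simp add: algebra_simps)
  show ?thesis
  proof (cases k)
    case (Suc k')
    have "(c + \<epsilon>) ^ k' * ((c + \<epsilon>) * \<alpha> + \<alpha> * real k) \<le> (c + \<epsilon>) ^ k' * (\<epsilon> * (c + \<epsilon>))"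
      using step assms(2) \<epsilon> s(1) assms(1) by (intro mult_left_mono) auto
    then show ?thesis
      using Suc by (simp add: algebra_simps)
  qed (use \<epsilon> s(1) in simp)
qed

lemma three_halves_absorb:
  fixes l \<epsilon> :: real
  assumes "0 \<le> l" "0 \<le> \<epsilon>" "l * (3/2) ^ K \<le> 1" "k \<le> K"
  shows "l * (3 + \<epsilon>) ^ k \<le> (2 + \<epsilon>) ^ k"
proof -
  have "l * (3 + \<epsilon>) ^ k \<le> l * ((3/2) ^ k * (2 + \<epsilon>) ^ k)"
    using assms(1,2) by (intro mult_left_mono) (auto simp flip: power_mult_distrib intro: power_mono)
  also have "\<dots> \<le> l * (3/2) ^ K * (2 + \<epsilon>) ^ k"
    using assms(1,2,4) by (simp add: mult.assoc[symmetric] mult_left_mono mult_right_mono power_increasing)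
  also have "\<dots> \<le> (2 + \<epsilon>) ^ k"
    using assms(2,3) by (simp add: mult_left_le_one_le)
  finally show ?thesis .
qed

lemma majorant_step:
  fixes \<alpha> l :: real
  assumes "0 \<le> \<alpha>" "0 \<le> l" "l * (3/2) ^ K \<le> 1" "k \<le> K" "\<epsilon> = \<alpha> + sqrt (real K * \<alpha>)"
  defines "F \<equiv> \<lambda>k. \<epsilon> ^ k + l * (1 + \<epsilon>) ^ k + l\<^sup>2 * (2 + \<epsilon>) ^ k"
  shows "\<alpha> * F k + \<alpha> * real k * F (k - 1)
           + l * ((1 + \<epsilon>) ^ k + l * (2 + \<epsilon>) ^ k + l\<^sup>2 * (3 + \<epsilon>) ^ k) \<le> F (Suc k)"
proof -
  have "0 \<le> \<epsilon>" using assms(1,5) by simp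
  note step = epsilon_power_step[OF assms(1) _ assms(4,5)]
  have "\<alpha> * F k + \<alpha> * real k * F (k - 1)
           + l * ((1 + \<epsilon>) ^ k + l * (2 + \<epsilon>) ^ k + l\<^sup>2 * (3 + \<epsilon>) ^ k)
      = (\<alpha> * (0 + \<epsilon>) ^ k + \<alpha> * real k * (0 + \<epsilon>) ^ (k - 1))
        + l * ((\<alpha> * (1 + \<epsilon>) ^ k + \<alpha> * real k * (1 + \<epsilon>) ^ (k - 1)) + (1 + \<epsilon>) ^ k)
        + l\<^sup>2 * ((\<alpha> * (2 + \<epsilon>) ^ k + \<alpha> * real k * (2 + \<epsilon>) ^ (k - 1))
                + (2 + \<epsilon>) ^ k + l * (3 + \<epsilon>) ^ k)"
    unfolding F_def by (simp add: algebra_simps power2_eq_square)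
  also have "\<dots> \<le> \<epsilon> * (0 + \<epsilon>) ^ k + l * (\<epsilon> * (1 + \<epsilon>) ^ k + (1 + \<epsilon>) ^ k)
                  + l\<^sup>2 * (\<epsilon> * (2 + \<epsilon>) ^ k + (2 + \<epsilon>) ^ k + (2 + \<epsilon>) ^ k)"
    using step[of 0] step[of 1] step[of 2] three_halves_absorb[OF assms(2) \<open>0 \<le> \<epsilon>\<close> assms(3,4)]
      assms(2) by (intro add_mono mult_left_mono) auto
  also have "\<dots> = F (Suc k)"
    unfolding F_def by (simp add: algebra_simps)
  finally show ?thesis .
qed

lemma binomial_sum_first_two:
  "(\<Sum>j\<le>k. real (k choose j) * (if j \<le> 1 then \<alpha> else 0) * h (k - j))
     = \<alpha> * h k + \<alpha> * real k * h (k - 1)"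
proof (cases k)
  case (Suc m)
  have "(\<Sum>j\<le>k. real (k choose j) * (if j \<le> 1 then \<alpha> else 0) * h (k - j))
      = (\<Sum>j\<in>{0, 1}. real (k choose j) * (if j \<le> 1 then \<alpha> else 0) * h (k - j))"
    using Suc by (intro sum.mono_neutral_right) auto
  then show ?thesis using Suc by simp
qed simp

text \<open>The term \<open>\<epsilon> ^ k\<close> accounts for the cumulants of order at most two; every use of a
  higher cumulant costs a factor \<open>l\<close> and raises the base by one, and
  \<open>l * (3/2) ^ K \<le> 1\<close> lets the \<open>l\<^sup>2\<close> term absorb all further ones.\<close>
lemma moment_of_cumulants_le_majorant:
  fixes \<kappa> :: "nat \<Rightarrow> real" and Q \<alpha> l :: real
  assumes "0 < Q" "0 \<le> \<alpha>" "0 \<le> l" "l * (3/2) ^ K \<le> 1" "\<epsilon> = \<alpha> + sqrt (real K * \<alpha>)"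
    and \<kappa>_nonneg: "\<And>j. 0 \<le> \<kappa> j"
    and \<kappa>_bound: "\<And>j. \<kappa> j \<le> Q ^ Suc j * ((if j \<le> 1 then \<alpha> else 0) + l)"
  shows "k \<le> K \<Longrightarrow> moment_of_cumulants \<kappa> k \<le> Q ^ k * (\<epsilon> ^ k + l * (1 + \<epsilon>) ^ k + l\<^sup>2 * (2 + \<epsilon>) ^ k)"
proof (induction k rule: less_induct)
  case (less k)
  define F where "F = (\<lambda>k. \<epsilon> ^ k + l * (1 + \<epsilon>) ^ k + l\<^sup>2 * (2 + \<epsilon>) ^ k)"
  define c where "c = (\<lambda>j::nat. (if j \<le> 1 then \<alpha> else 0) + l)"
  have "0 \<le> \<epsilon>" using assms(2,5) by simp
  show ?case
  proof (cases k)
    case (Suc k')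
    have "moment_of_cumulants \<kappa> k
        \<le> (\<Sum>j\<le>k'. real (k' choose j) * (Q ^ Suc j * c j) * (Q ^ (k' - j) * F (k' - j)))"
      using Suc less \<kappa>_bound moment_of_cumulants_nonneg[of \<kappa>, OF \<kappa>_nonneg] \<kappa>_nonneg assms(1-3)
      unfolding F_def c_def by (auto intro!: sum_mono mult_mono)
    also have "\<dots> = Q ^ k * (\<Sum>j\<le>k'. real (k' choose j) * c j * F (k' - j))"
      unfolding sum_distrib_left
    proof (intro sum.cong refl)
      fix j assume "j \<in> {..k'}"
      then have "Q ^ Suc j * Q ^ (k' - j) = Q ^ k" using Suc by (simp flip: power_add)
      then show "real (k' choose j) * (Q ^ Suc j * c j) * (Q ^ (k' - j) * F (k' - j))
          = Q ^ k * (real (k' choose j) * c j * F (k' - j))"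
        by (simp add: algebra_simps)
    qed
    also have "(\<Sum>j\<le>k'. real (k' choose j) * c j * F (k' - j))
        = \<alpha> * F k' + \<alpha> * real k' * F (k' - 1) + l * (\<Sum>j\<le>k'. real (k' choose j) * F (k' - j))"
      unfolding c_def binomial_sum_first_two[symmetric] sum_distrib_left sum.distrib[symmetric]
      by (intro sum.cong) (auto simp: algebra_simps)
    also have "(\<Sum>j\<le>k'. real (k' choose j) * F (k' - j))
        = (1 + \<epsilon>) ^ k' + l * (2 + \<epsilon>) ^ k' + l\<^sup>2 * (3 + \<epsilon>) ^ k'"
      using binomial_ring[of 1 \<epsilon> k'] binomial_ring[of 1 "1 + \<epsilon>" k'] binomial_ring[of 1 "2 + \<epsilon>" k']
      unfolding F_def by (simp add: sum.distrib sum_distrib_left algebra_simps)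
    also have "\<alpha> * F k' + \<alpha> * real k' * F (k' - 1)
        + l * ((1 + \<epsilon>) ^ k' + l * (2 + \<epsilon>) ^ k' + l\<^sup>2 * (3 + \<epsilon>) ^ k') \<le> F k"
      using majorant_step[OF assms(2-4) _ assms(5), of k'] Suc less.prems unfolding F_def by simp
    finally show ?thesis
      using assms(1) unfolding F_def by (simp add: mult_left_mono)
  qed (use assms(3) in simp)
qed

section \<open>Cycle counts of powers of a permutation\<close>

lemma card_orbit_eq_least_power:
  assumes "permutation p"
  shows "card (orbit p a) = least_power p a"
proof -
  have "orbit p a = set (support p a)"
    using orbit_altdef_permutation[OF assms] support_set[OF assms] by auto
  also have "card \<dots> = length (support p a)"
    using cycle_of_permutation[OF assms] by (rule distinct_card)
  finally show ?thesis by simp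
qed

lemma card_orbit_dvd_iff:
  "permutation p \<Longrightarrow> card (orbit p x) dvd m \<longleftrightarrow> (p ^^ m) x = x"
  by (simp add: card_orbit_eq_least_power least_power_dvd)

lemma card_orbit_funpow:
  assumes p: "permutation p"
  shows "card (orbit (p ^^ q) x) = card (orbit p x) div gcd (card (orbit p x)) q"
proof -
  define L where "L = card (orbit p x)"
  define g where "g = gcd L q"
  have "L \<noteq> 0"
    unfolding L_def using finite_orbit[OF permutation_self_in_orbit[OF p]] orbit_nonempty[of p x]
    by simp
  then have "g \<noteq> 0" "coprime (L div g) (q div g)"
    unfolding g_def by (auto intro: div_gcd_coprime)
  have L: "L = g * (L div g)" and q: "q = g * (q div g)"
    unfolding g_def by simp_all
  have "card (orbit (p ^^ q) x) dvd k \<longleftrightarrow> L div g dvd k" for k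
  proof -
    have "card (orbit (p ^^ q) x) dvd k \<longleftrightarrow> L dvd q * k"
      unfolding L_def
      by (simp add: card_orbit_dvd_iff[OF p] card_orbit_dvd_iff[OF permutation_funpow[OF p]]
                    funpow_mult)
    also have "\<dots> \<longleftrightarrow> g * (L div g) dvd g * ((q div g) * k)"
      using L q by (metis mult.assoc)
    also have "\<dots> \<longleftrightarrow> L div g dvd k"
      using \<open>g \<noteq> 0\<close> \<open>coprime (L div g) (q div g)\<close> by (simp add: coprime_dvd_mult_right_iff)
    finally show ?thesis .
  qed
  then show ?thesis unfolding L_def g_def by (meson dvd_antisym dvd_refl)
qed

lemma cycle_count_eq_sum:
  assumes \<sigma>: "\<sigma> permutes {..<n}" and "d \<ge> 1"
  shows "real (cycle_count n \<sigma> d) = (\<Sum>x<n. if card (orbit \<sigma> x) = d then 1 / real d else 0)"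
proof -
  let ?C = "{orbit \<sigma> x | x. x < n \<and> card (orbit \<sigma> x) = d}"
  let ?U = "{x. x < n \<and> card (orbit \<sigma> x) = d}"
  have perm: "permutation \<sigma>" using \<sigma> permutation_permutes by blast
  have "\<Union>?C = ?U"
  proof (intro set_eqI iffI)
    fix y assume "y \<in> \<Union>?C"
    then obtain x where "x < n" "card (orbit \<sigma> x) = d" "y \<in> orbit \<sigma> x" by auto
    moreover from this have "y < n" using permutes_orbit_subset[OF \<sigma>, of x] by auto
    ultimately show "y \<in> ?U" using orbit_eq_if_in_orbit[OF perm] by auto
  qed (use permutation_self_in_orbit[OF perm] in auto)
  have "finite ?C"
    by (rule finite_subset[of _ "orbit \<sigma> ` ?U"]) auto
  moreover have "c1 \<inter> c2 = {}" if "c1 \<in> ?C" "c2 \<in> ?C" "c1 \<noteq> c2" for c1 c2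
    using that orbit_eq_if_in_orbit[OF perm] by blast
  ultimately have "d * card ?C = card ?U"
    using \<open>\<Union>?C = ?U\<close> by (intro card_partition[of ?C d, simplified \<open>\<Union>?C = ?U\<close>]) auto
  then have "real (card ?C) = (\<Sum>x\<in>?U. 1 / real d)"
    using \<open>d \<ge> 1\<close> by (simp add: field_simps flip: of_nat_mult)
  also have "\<dots> = (\<Sum>x<n. if card (orbit \<sigma> x) = d then 1 / real d else 0)"
    by (subst sum.inter_filter[symmetric]) (auto intro: sum.cong)
  finally show ?thesis unfolding cycle_count_def .
qed

definition short_cycle_weight :: "nat \<Rightarrow> nat \<Rightarrow> real" where
  "short_cycle_weight r l = (if 1 \<le> l \<and> l \<le> r then 1 / real l else 0)"

lemma sum_cycle_count_eq_cycle_stat: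
  assumes "\<sigma> permutes {..<n}"
  shows "real (\<Sum>d=1..r. cycle_count n \<sigma> d) = cycle_stat (short_cycle_weight r) {..<n} \<sigma>"
proof -
  have "real (\<Sum>d=1..r. cycle_count n \<sigma> d)
      = (\<Sum>d=1..r. \<Sum>x<n. if card (orbit \<sigma> x) = d then 1 / real d else 0)"
    unfolding of_nat_sum using cycle_count_eq_sum[OF assms] by (intro sum.cong) auto
  also have "\<dots> = (\<Sum>x<n. \<Sum>d=1..r. if card (orbit \<sigma> x) = d then 1 / real d else 0)"
    by (rule sum.swap)
  also have "\<dots> = cycle_stat (short_cycle_weight r) {..<n} \<sigma>"
    unfolding cycle_stat_def short_cycle_weight_def by (intro sum.cong refl) auto
  finally show ?thesis .
qed

lemma sum_cycle_count_funpow_eq_cycle_stat: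
  assumes "\<pi> permutes {..<n}"
  shows "real (\<Sum>d=1..r. cycle_count n (\<pi> ^^ q) d)
       = cycle_stat (\<lambda>L. short_cycle_weight r (L div gcd L q)) {..<n} \<pi>"
proof -
  have "permutation \<pi>" using assms permutation_permutes by blast
  then show ?thesis
    unfolding sum_cycle_count_eq_cycle_stat[OF permutes_funpow[OF assms]] cycle_stat_def
    by (simp add: card_orbit_funpow)
qed

lemma divisor_sigma_of_nat:
  "q > 0 \<Longrightarrow> divisor_sigma (real j) q = (\<Sum>d | d dvd q. real d ^ j)"
  unfolding divisor_sigma_def by (intro sum.cong refl) (auto simp: powr_realpow dest: dvd_imp_le)

text \<open>The map \<open>L \<mapsto> (gcd L q, L div gcd L q)\<close> is injective, a cycle of length \<open>L\<close>
  has weight \<open>gcd L q\<close>, and its contribution is nonzero only if \<open>L div gcd L q \<le> r\<close>.\<close>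
lemma short_power_weight_sum_le:
  fixes q r :: nat
  assumes "q > 0"
  defines "G \<equiv> \<lambda>L. short_cycle_weight r (L div gcd L q)"
  shows "(\<Sum>i\<le>m. G (Suc i) * cycle_weight G (Suc i) ^ j) \<le> harmonic_num r * divisor_sigma (real j) q"
proof -
  let ?f = "\<lambda>L. G L * cycle_weight G L ^ j"
  let ?S = "{L \<in> Suc ` {..m}. 1 \<le> L div gcd L q \<and> L div gcd L q \<le> r}"
  let ?\<phi> = "\<lambda>L. (gcd L q, L div gcd L q)"
  let ?F = "\<lambda>(g, l). real g ^ j * (1 / real l)"
  have "(\<Sum>i\<le>m. ?f (Suc i)) = sum ?f (Suc ` {..m})" by (simp add: sum.reindex)
  also have "\<dots> = sum ?f ?S"
    by (rule sum.mono_neutral_right) (auto simp: G_def short_cycle_weight_def)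
  also have "\<dots> = sum (?F \<circ> ?\<phi>) ?S"
  proof (intro sum.cong refl)
    fix L assume "L \<in> ?S"
    moreover have "real L = real (gcd L q) * real (L div gcd L q)"
      by (simp flip: of_nat_mult)
    ultimately have "cycle_weight G L = real (gcd L q)"
      by (auto simp: cycle_weight_def G_def short_cycle_weight_def)
    then show "?f L = (?F \<circ> ?\<phi>) L"
      using \<open>L \<in> ?S\<close> by (simp add: G_def short_cycle_weight_def)
  qed
  also have "\<dots> = sum ?F (?\<phi> ` ?S)"
    by (rule sum.reindex[symmetric], rule inj_onI) (metis prod.inject dvd_mult_div_cancel gcd_dvd1)
  also have "\<dots> \<le> sum ?F ({d. d dvd q} \<times> {1..r})"
    using assms(1) by (intro sum_mono2) auto
  also have "\<dots> = harmonic_num r * divisor_sigma (real j) q"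
    unfolding sum.cartesian_product[symmetric] divisor_sigma_of_nat[OF assms(1)]
      harmonic_num_def sum_product
    by (subst sum.swap) (simp add: mult.commute)
  finally show ?thesis .
qed

lemma power_cycle_count_moment_le:
  assumes "q > 0"
  shows "(1 / fact n) * (\<Sum>\<pi> | \<pi> permutes {..<n}. (real (\<Sum>d=1..r. cycle_count n (\<pi> ^^ q) d)) ^ \<delta>)
       \<le> moment_of_cumulants (\<lambda>j. harmonic_num r * divisor_sigma (real j) q) \<delta>"
proof -
  let ?G = "\<lambda>L. short_cycle_weight r (L div gcd L q)"
  have "(\<Sum>\<pi> | \<pi> permutes {..<n}. (real (\<Sum>d=1..r. cycle_count n (\<pi> ^^ q) d)) ^ \<delta>)
      = perm_sum ?G n (\<lambda>y. y ^ \<delta>)"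
    unfolding perm_sum_def
    by (rule sum.cong) (simp_all only: mem_Collect_eq sum_cycle_count_funpow_eq_cycle_stat)
  then have "(1 / fact n) * (\<Sum>\<pi> | \<pi> permutes {..<n}. (real (\<Sum>d=1..r. cycle_count n (\<pi> ^^ q) d)) ^ \<delta>)
      = stat_moment ?G n \<delta>"
    by (simp add: stat_moment_def)
  also have "\<dots> \<le> moment_of_cumulants (\<lambda>j. harmonic_num r * divisor_sigma (real j) q) \<delta>"
    by (rule stat_moment_le_moment_of_cumulants[OF _ short_power_weight_sum_le[OF assms]])
       (simp add: short_cycle_weight_def)
  finally show ?thesis .
qed

section \<open>Divisor sums and harmonic numbers\<close>

lemma card_divisors_mult_coprime:
  fixes a b :: nat
  assumes "coprime a b" "a > 0" "b > 0"
  shows "card {d. d dvd a * b} = card {d. d dvd a} * card {d. d dvd b}"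
proof -
  let ?m = "\<lambda>(x::nat, y). x * y"
  have "{d. d dvd a * b} = ?m ` ({x. x dvd a} \<times> {y. y dvd b})"
  proof (intro set_eqI iffI)
    fix d assume "d \<in> {d. d dvd a * b}"
    then obtain x y where "d = x * y" "x dvd a" "y dvd b" using division_decomp[of d a b] by auto
    then show "d \<in> ?m ` ({x. x dvd a} \<times> {y. y dvd b})" by force
  qed (auto intro: mult_dvd_mono)
  moreover have "inj_on ?m ({x. x dvd a} \<times> {y. y dvd b})"
  proof (rule inj_onI, clarify)
    fix x1 y1 x2 y2
    assume dvd: "x1 dvd a" "y1 dvd b" "x2 dvd a" "y2 dvd b" and eq: "x1 * y1 = x2 * y2"
    have "coprime x1 y2" "coprime x2 y1"
      using dvd assms(1) by (auto intro: coprime_divisors)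
    then have "x1 dvd x2" "x2 dvd x1"
      using eq by (metis coprime_dvd_mult_left_iff dvd_triv_left)+
    then have "x1 = x2" by (rule dvd_antisym)
    moreover have "x1 > 0" using dvd(1) assms(2) by (auto intro: Nat.gr0I)
    ultimately show "x1 = x2 \<and> y1 = y2" using eq by simp
  qed
  ultimately show ?thesis
    using assms(2,3) by (simp add: card_image card_cartesian_product)
qed

lemma card_divisors_prime_power:
  fixes p :: nat
  assumes "prime p"
  shows "card {d. d dvd p ^ e} = Suc e"
proof -
  have "{d. d dvd p ^ e} = (\<lambda>i. p ^ i) ` {..e}"
    using divides_primepow_nat[OF assms] by auto
  moreover have "inj_on (\<lambda>i. p ^ i) {..e}"
    using assms by (intro inj_onI) (auto simp: prime_gt_Suc_0_nat)
  ultimately show ?thesis by (simp add: card_image)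
qed

lemma Suc_cube_le_8_pow: "Suc e ^ 3 \<le> 8 ^ e"
proof (induction e)
  case (Suc e)
  have "Suc (Suc e) ^ 3 \<le> 8 * Suc e ^ 3" by (simp add: power3_eq_cube algebra_simps)
  then show ?case using Suc by simp
qed simp

lemma Suc_cube_le_8_mult_2_pow: "Suc e ^ 3 \<le> 8 * 2 ^ e"
proof (induction e rule: less_induct)
  case (less e)
  show ?case
  proof (cases "e \<le> 3")
    case True
    then have "e \<in> {0, 1, 2, 3}" by auto
    then show ?thesis by (auto simp: power3_eq_cube)
  next
    case False
    then obtain e' where e: "e = Suc e'" and "e' \<ge> 3" by (cases e) auto
    then have "9 \<le> e' * e'" using mult_le_mono[of 3 e' 3 e'] by simp
    then have "9 * e' \<le> e' * e' * e'" by simp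
    then have "6 * e' + 6 \<le> e' ^ 3" using \<open>e' \<ge> 3\<close> unfolding power3_eq_cube by linarith
    then have "Suc (Suc e') ^ 3 \<le> 2 * Suc e' ^ 3"
      by (simp add: power3_eq_cube power2_eq_square algebra_simps)
    then show ?thesis using less[of e'] e by simp
  qed
qed

text \<open>A prime power \<open>p ^ e\<close> has \<open>e + 1\<close> divisors, and \<open>(e + 1)\<^sup>3 \<le> p ^ e\<close> unless
  \<open>p < 8\<close>, in which case the loss is a factor at most \<open>8\<close>.\<close>
lemma Suc_cube_le_prime_power:
  fixes p :: nat
  assumes "prime p"
  shows "Suc e ^ 3 \<le> (if p < 8 then 8 else 1) * p ^ e"
proof (cases "p < 8")
  case True
  have "Suc e ^ 3 \<le> 8 * 2 ^ e" by (rule Suc_cube_le_8_mult_2_pow)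
  also have "\<dots> \<le> 8 * p ^ e" using prime_gt_1_nat[OF assms] by (simp add: power_mono)
  finally show ?thesis using True by simp
next
  case False
  have "Suc e ^ 3 \<le> 8 ^ e" by (rule Suc_cube_le_8_pow)
  also have "\<dots> \<le> p ^ e" using False by (simp add: power_mono)
  finally show ?thesis using False by simp
qed

lemma small_prime_divisors_mult_prime_power:
  fixes p m :: nat
  assumes "prime p" "e \<ge> 1"
  shows "{p'. p' < 8 \<and> prime p' \<and> p' dvd p ^ e * m}
       = (if p < 8 then {p} else {}) \<union> {p'. p' < 8 \<and> prime p' \<and> p' dvd m}"
  using assms by (auto simp: prime_dvd_mult_iff) (metis prime_dvd_power primes_dvd_imp_eq)+

lemma card_divisors_cube_le:
  fixes n :: nat
  assumes "n > 0"
  shows "card {d. d dvd n} ^ 3 \<le> 8 ^ card {p. p < 8 \<and> prime p \<and> p dvd n} * n"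
  using assms
proof (induction n rule: less_induct)
  case (less n)
  let ?small = "\<lambda>n. {p::nat. p < 8 \<and> prime p \<and> p dvd n}"
  show ?case
  proof (cases "n = 1")
    case False
    then obtain p where p: "prime p" "p dvd n" using prime_factor_nat by blast
    define e where "e = multiplicity p n"
    obtain m where n: "n = p ^ e * m" and "\<not> p dvd m"
      using multiplicity_decompose'[of n p] less.prems p(1) unfolding e_def
      by (metis not_prime_unit not_gr0)
    have "m > 0" "e \<ge> 1" using n less.prems p \<open>\<not> p dvd m\<close> by (auto intro: Nat.gr0I) (cases e, auto)
    have "p > 1" using prime_gt_1_nat[OF p(1)] .
    then have "1 < p ^ e" using \<open>e \<ge> 1\<close> by (intro one_less_power) auto
    then have "m < n" using n \<open>m > 0\<close> by simp
    have coprime: "coprime (p ^ e) m"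
      using prime_imp_coprime[OF p(1) \<open>\<not> p dvd m\<close>] by simp
    have "card {d. d dvd p ^ e * m} = card {d. d dvd p ^ e} * card {d. d dvd m}"
      using card_divisors_mult_coprime[OF coprime] \<open>p > 1\<close> \<open>m > 0\<close> by simp
    then have card_n: "card {d. d dvd n} = Suc e * card {d. d dvd m}"
      unfolding n card_divisors_prime_power[OF p(1)] .
    have small_n: "8 ^ card (?small n) = (if p < 8 then 8 else 1) * (8::nat) ^ card (?small m)"
      unfolding n small_prime_divisors_mult_prime_power[OF p(1) \<open>e \<ge> 1\<close>]
      using \<open>\<not> p dvd m\<close> by (simp add: card_insert_if)
    have "card {d. d dvd n} ^ 3 \<le> ((if p < 8 then 8 else 1) * p ^ e) * (8 ^ card (?small m) * m)"
      unfolding card_n power_mult_distrib using less.IH[OF \<open>m < n\<close> \<open>m > 0\<close>]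
      by (intro mult_mono Suc_cube_le_prime_power[OF p(1)]) auto
    then show ?thesis by (subst small_n) (simp add: n mult_ac)
  qed simp
qed

lemma card_divisors_cube_le_const:
  fixes n :: nat
  assumes "n > 0"
  shows "card {d. d dvd n} ^ 3 \<le> 2 ^ 24 * n"
proof -
  have "card {p. p < 8 \<and> prime p \<and> p dvd n} \<le> card {..<8::nat}" by (intro card_mono) auto
  then have "(8::nat) ^ card {p. p < 8 \<and> prime p \<and> p dvd n} \<le> 8 ^ 8" by (intro power_increasing) auto
  then show ?thesis using card_divisors_cube_le[OF assms] by (simp add: order_trans mult_right_mono)
qed

lemma divisor_sigma_nonneg: "0 \<le> divisor_sigma a q"
  unfolding divisor_sigma_def by (intro sum_nonneg) simp

lemma divisor_sigma_0_eq_card: "q > 0 \<Longrightarrow> divisor_sigma 0 q = card {d. d dvd q}"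
  using divisor_sigma_of_nat[of q 0] by simp

lemma divisor_sigma_1_le:
  assumes "q > 0"
  shows "divisor_sigma 1 q \<le> real q * divisor_sigma 0 q"
proof -
  have "divisor_sigma 1 q = (\<Sum>d | d dvd q. real d)"
    using divisor_sigma_of_nat[OF assms, of 1] by simp
  also have "\<dots> \<le> (\<Sum>d | d dvd q. real q)"
    using assms by (intro sum_mono) (auto dest: dvd_imp_le)
  also have "\<dots> = real q * divisor_sigma 0 q"
    using divisor_sigma_0_eq_card[OF assms] by simp
  finally show ?thesis .
qed

lemma sum_inverse_squares_le: "n \<ge> 1 \<Longrightarrow> (\<Sum>e=1..n. 1 / (real e)\<^sup>2) \<le> 2 - 1 / real n"
proof (induction n rule: nat_induct_at_least)
  case (Suc n)
  have "1 / (1 + real n)\<^sup>2 \<le> 1 / (real n * (1 + real n))"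
    using Suc by (intro divide_left_mono) (auto simp: power2_eq_square)
  also have "\<dots> = 1 / real n - 1 / (1 + real n)"
    using Suc by (simp add: field_simps)
  finally have "1 / (1 + real n)\<^sup>2 \<le> 1 / real n - 1 / (1 + real n)" .
  moreover have "(\<Sum>e=1..Suc n. 1 / (real e)\<^sup>2) = (\<Sum>e=1..n. 1 / (real e)\<^sup>2) + 1 / (1 + real n)\<^sup>2"
    by simp
  ultimately show ?case using Suc.IH by simp
qed simp

text \<open>Substituting \<open>d \<mapsto> q div d\<close> gives \<open>\<sigma>\<^sub>j(q) \<le> q\<^sup>j \<Sum>\<^sub>d d\<^sup>-\<^sup>2 \<le> 2 q\<^sup>j\<close>.\<close>
lemma divisor_sigma_of_nat_le:
  assumes "q > 0" "j \<ge> 2"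
  shows "divisor_sigma (real j) q \<le> 2 * real q ^ j"
proof -
  let ?D = "{d. d dvd q}"
  have "divisor_sigma (real j) q = (\<Sum>e\<in>?D. real (q div e) ^ j)"
    unfolding divisor_sigma_of_nat[OF assms(1)]
    by (rule sum.reindex_bij_witness[of _ "\<lambda>e. q div e" "\<lambda>e. q div e"])
       (auto simp: assms(1) div_div_eq_right dvd_div_eq_mult elim: dvdE)
  also have "\<dots> \<le> (\<Sum>e\<in>?D. real q ^ j * (1 / (real e)\<^sup>2))"
  proof (intro sum_mono)
    fix e assume e: "e \<in> ?D"
    then have "real e \<ge> 1" using assms(1) by (cases e) auto
    have "real (q div e) ^ j = real q ^ j / real e ^ j"
      using e by (simp add: real_of_nat_div power_divide)
    also have "\<dots> \<le> real q ^ j / real e ^ 2"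
      using \<open>real e \<ge> 1\<close> assms(2) by (intro divide_left_mono power_increasing) auto
    finally show "real (q div e) ^ j \<le> real q ^ j * (1 / (real e)\<^sup>2)" by simp
  qed
  also have "\<dots> \<le> real q ^ j * (\<Sum>e=1..q. 1 / (real e)\<^sup>2)"
    unfolding sum_distrib_left[symmetric]
    using assms(1) by (intro mult_left_mono sum_mono2) (auto dest: dvd_imp_le intro: Nat.gr0I)
  also have "\<dots> \<le> real q ^ j * 2"
  proof (intro mult_left_mono)
    have "0 \<le> 1 / real q" by simp
    then show "(\<Sum>e=1..q. 1 / (real e)\<^sup>2) \<le> 2"
      using sum_inverse_squares_le[of q] assms(1) by linarith
  qed simp
  finally show ?thesis by simp
qed

lemma harmonic_num_eq_harm: "harmonic_num r = harm r"
  unfolding harmonic_num_def harm_def by (simp add: divide_inverse)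

lemma harmonic_num_le_ln:
  assumes "r \<ge> 1"
  shows "harmonic_num r \<le> 1 + ln (real r)"
proof -
  obtain m where "r = Suc m" using assms by (cases r) auto
  then have "harm r - ln (real r) \<le> harm (Suc 0) - ln (real (Suc 0))"
    using decseq_harm_diff_ln unfolding decseq_def by (metis le0)
  moreover have "harm (Suc 0) = (1::real)" by (simp add: harm_def)
  ultimately show ?thesis by (simp add: harmonic_num_eq_harm)
qed

lemma one_le_harmonic_num: "r \<ge> 1 \<Longrightarrow> 1 \<le> harmonic_num r"
  using harm_mono[of 1 r] by (simp add: harmonic_num_eq_harm harm_def)

section \<open>Bounding the moments\<close>

lemma moment_of_cumulants_1: "moment_of_cumulants \<kappa> 1 = \<kappa> 0"
  by (simp add: numeral_eq_Suc)

lemma moment_of_cumulants_2: "moment_of_cumulants \<kappa> 2 = (\<kappa> 0)\<^sup>2 + \<kappa> 1"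
  by (simp add: numeral_eq_Suc power2_eq_square)

lemma moment_of_cumulants_3: "moment_of_cumulants \<kappa> 3 = (\<kappa> 0) ^ 3 + 3 * \<kappa> 0 * \<kappa> 1 + \<kappa> 2"
  by (simp add: numeral_eq_Suc power3_eq_cube algebra_simps)

lemma epsilon_bounds:
  fixes \<alpha> :: real
  assumes "0 \<le> \<alpha>" "4 \<le> \<delta>" "real \<delta> ^ 3 * \<alpha> \<le> 1" "\<epsilon> = \<alpha> + sqrt (real \<delta> * \<alpha>)"
  shows "\<epsilon> \<le> 1" "real \<delta> * \<epsilon> \<le> 2" "\<epsilon> ^ 4 \<le> 16 * (real \<delta> * \<alpha>)\<^sup>2"
proof -
  define s where "s = sqrt (real \<delta> * \<alpha>)"
  have s: "0 \<le> s" "s\<^sup>2 = real \<delta> * \<alpha>" unfolding s_def using assms(1) by simp_all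
  have "16 * real \<delta> \<le> real \<delta> ^ 3"
    using assms(2) mult_mono[of 4 "real \<delta>" 4 "real \<delta>"] by (simp add: power3_eq_cube)
  then have "16 * real \<delta> * \<alpha> \<le> real \<delta> ^ 3 * \<alpha>"
    using assms(1) by (rule mult_right_mono)
  then have small: "16 * (real \<delta> * \<alpha>) \<le> 1" using assms(3) by simp
  have "1 * \<alpha> \<le> (16 * real \<delta>) * \<alpha>"
    using assms(1,2) by (intro mult_right_mono) auto
  then have "\<alpha> \<le> real \<delta>" using small assms(2) by simp
  then have "\<alpha>\<^sup>2 \<le> real \<delta> * \<alpha>"
    using assms(1) by (simp add: power2_eq_square mult_right_mono)
  then have "\<alpha> \<le> s" unfolding s_def by (rule real_le_rsqrt)
  then have "\<epsilon>\<^sup>2 \<le> (2 * s)\<^sup>2" using assms(1,4) s(1) unfolding s_def[symmetric] by (intro power_mono) auto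
  then have \<epsilon>2: "\<epsilon>\<^sup>2 \<le> 4 * (real \<delta> * \<alpha>)" using s(2) by (simp add: power_mult_distrib)
  have "0 \<le> \<epsilon>" using assms(1,4) by simp
  have "\<epsilon>\<^sup>2 \<le> 1" using \<epsilon>2 small by linarith
  then show "\<epsilon> \<le> 1" using \<open>0 \<le> \<epsilon>\<close> by (simp add: power_le_one_iff)
  have "(real \<delta> * \<epsilon>)\<^sup>2 \<le> (real \<delta>)\<^sup>2 * (4 * (real \<delta> * \<alpha>))"
    unfolding power_mult_distrib using \<epsilon>2 by (intro mult_left_mono) auto
  also have "\<dots> = 4 * (real \<delta> ^ 3 * \<alpha>)" by (simp add: power2_eq_square power3_eq_cube)
  also have "\<dots> \<le> 2\<^sup>2" using assms(3) by simp
  finally show "real \<delta> * \<epsilon> \<le> 2" by (rule power2_le_imp_le) simp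
  have "\<epsilon> ^ 4 = (\<epsilon>\<^sup>2)\<^sup>2" by simp
  also have "\<dots> \<le> (4 * (real \<delta> * \<alpha>))\<^sup>2" using \<epsilon>2 by (intro power_mono) auto
  finally show "\<epsilon> ^ 4 \<le> 16 * (real \<delta> * \<alpha>)\<^sup>2" by (simp add: power_mult_distrib)
qed

lemma three_halves_power_bound:
  fixes q H :: real
  assumes "0 \<le> H" "2 ^ \<delta> \<le> q" "32 * H ^ 5 \<le> q\<^sup>2"
  shows "2 * H / q * (3/2) ^ \<delta> \<le> 1"
proof -
  have "0 < (2::real) ^ \<delta>" by simp
  then have "0 < q" using assms(2) by linarith
  have "((3/2::real) ^ \<delta>) ^ 5 = ((3/2) ^ 5) ^ \<delta>" by (simp only: power_mult[symmetric] mult.commute)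
  also have "\<dots> \<le> 8 ^ \<delta>" by (intro power_mono) (simp_all add: power_divide)
  also have "(8::real) ^ \<delta> = (2 ^ 3) ^ \<delta>" by simp
  also have "\<dots> = (2 ^ \<delta>) ^ 3" by (simp only: power_mult[symmetric] mult.commute)
  also have "\<dots> \<le> q ^ 3" using assms(2) by (intro power_mono) auto
  finally have "(2 * H / q) ^ 5 * ((3/2) ^ \<delta>) ^ 5 \<le> (2 * H / q) ^ 5 * q ^ 3"
    using assms(1) \<open>0 < q\<close> by (intro mult_left_mono) auto
  then have "(2 * H / q * (3/2) ^ \<delta>) ^ 5 \<le> (2 * H / q) ^ 5 * q ^ 3"
    by (simp only: power_mult_distrib)
  also have "\<dots> = 32 * H ^ 5 / q\<^sup>2"
    using \<open>0 < q\<close> by (simp add: field_simps)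
  also have "\<dots> \<le> 1" using assms(3) \<open>0 < q\<close> by simp
  finally show ?thesis
    using assms(1) \<open>0 < q\<close> by (simp add: power_le_one_iff)
qed

lemma one_plus_power_le_9:
  fixes \<epsilon> :: real
  assumes "0 \<le> \<epsilon>" "real \<delta> * \<epsilon> \<le> 2"
  shows "(1 + \<epsilon>) ^ \<delta> \<le> 9"
proof -
  have "(1 + \<epsilon>) ^ \<delta> \<le> exp \<epsilon> ^ \<delta>"
    using assms(1) by (intro power_mono) auto
  also have "\<dots> \<le> exp 2"
    using assms(2) by (simp add: exp_of_nat_mult[symmetric])
  also have "exp (2::real) = exp 1 * exp 1" by (simp flip: exp_add)
  also have "\<dots> \<le> 3 * 3" using exp_le by (intro mult_mono) auto
  finally show ?thesis by simp
qed

lemma majorant_le_large: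
  fixes q H \<epsilon> :: real
  assumes "1 \<le> H" "0 \<le> \<epsilon>" "\<epsilon> \<le> 1" "real \<delta> * \<epsilon> \<le> 2" "4 \<le> \<delta>" "2 ^ \<delta> \<le> q"
    and "q * \<epsilon> ^ 4 \<le> H\<^sup>2"
  shows "q ^ \<delta> * (\<epsilon> ^ \<delta> + 2 * H / q * (1 + \<epsilon>) ^ \<delta> + (2 * H / q)\<^sup>2 * (2 + \<epsilon>) ^ \<delta>)
           \<le> 55 * q ^ (\<delta> - 1) * H\<^sup>2"
proof -
  have "0 < (2::real) ^ \<delta>" by simp
  then have "0 < q" using assms(6) by linarith
  define Q where "Q = q ^ (\<delta> - 1)"
  have "0 \<le> Q" "q ^ \<delta> = q * Q"
    unfolding Q_def using \<open>0 < q\<close> assms(5) by (simp_all flip: power_Suc)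
  have one: "(1 + \<epsilon>) ^ \<delta> \<le> 9" using assms(2,4) by (rule one_plus_power_le_9)
  have "(2 + \<epsilon>) ^ \<delta> \<le> (2 * (1 + \<epsilon>)) ^ \<delta>"
    using assms(2) by (intro power_mono) auto
  also have "\<dots> \<le> q * 9"
    unfolding power_mult_distrib using assms(2,6) one \<open>0 < q\<close> by (intro mult_mono) auto
  finally have two: "(2 + \<epsilon>) ^ \<delta> \<le> 9 * q" by simp
  have "q ^ \<delta> * \<epsilon> ^ \<delta> \<le> Q * (q * \<epsilon> ^ 4)"
    using \<open>q ^ \<delta> = q * Q\<close> \<open>0 < q\<close> \<open>0 \<le> Q\<close> assms(2,5,3)
    by (simp add: mult_left_mono power_decreasing mult.assoc)
  also have "\<dots> \<le> Q * H\<^sup>2" using assms(7) \<open>0 \<le> Q\<close> by (rule mult_left_mono)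
  finally have "q ^ \<delta> * \<epsilon> ^ \<delta> \<le> Q * H\<^sup>2" .
  moreover have "q ^ \<delta> * (2 * H / q * (1 + \<epsilon>) ^ \<delta>) \<le> Q * (18 * H\<^sup>2)"
  proof -
    have "q ^ \<delta> * (2 * H / q * (1 + \<epsilon>) ^ \<delta>) = Q * (2 * H * (1 + \<epsilon>) ^ \<delta>)"
      using \<open>q ^ \<delta> = q * Q\<close> \<open>0 < q\<close> by simp
    also have "\<dots> \<le> Q * (2 * H\<^sup>2 * 9)"
      using assms(1,2) one \<open>0 \<le> Q\<close> by (intro mult_left_mono mult_mono) (auto simp: power2_eq_square)
    finally show ?thesis by simp
  qed
  moreover have "q ^ \<delta> * ((2 * H / q)\<^sup>2 * (2 + \<epsilon>) ^ \<delta>) \<le> Q * (36 * H\<^sup>2)"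
  proof -
    have "q ^ \<delta> * ((2 * H / q)\<^sup>2 * (2 + \<epsilon>) ^ \<delta>) = Q * (4 * H\<^sup>2 * ((2 + \<epsilon>) ^ \<delta> / q))"
      using \<open>q ^ \<delta> = q * Q\<close> \<open>0 < q\<close> by (simp add: power2_eq_square field_simps)
    also have "\<dots> \<le> Q * (4 * H\<^sup>2 * 9)"
      using two \<open>0 < q\<close> \<open>0 \<le> Q\<close> by (intro mult_left_mono) (auto simp: field_simps)
    finally show ?thesis by simp
  qed
  ultimately have "q ^ \<delta> * (\<epsilon> ^ \<delta> + 2 * H / q * (1 + \<epsilon>) ^ \<delta> + (2 * H / q)\<^sup>2 * (2 + \<epsilon>) ^ \<delta>)
      \<le> Q * H\<^sup>2 + Q * (18 * H\<^sup>2) + Q * (36 * H\<^sup>2)"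
    by (simp only: distrib_left)
  then show ?thesis unfolding Q_def by (simp add: algebra_simps)
qed

lemma moment_of_cumulants_large_le:
  fixes \<kappa> :: "nat \<Rightarrow> real" and q H s :: real
  assumes \<kappa>_nonneg: "\<And>j. 0 \<le> \<kappa> j"
    and \<kappa>_bound: "\<And>j. \<kappa> j \<le> q ^ Suc j * ((if j \<le> 1 then H * s / q else 0) + 2 * H / q)"
    and "1 \<le> H" "0 \<le> s" "4 \<le> \<delta>" "2 ^ \<delta> \<le> q"
    and "real \<delta> ^ 3 * (H * s) \<le> q" "16 * (real \<delta> * s)\<^sup>2 \<le> q" "32 * H ^ 5 \<le> q\<^sup>2"
  shows "moment_of_cumulants \<kappa> \<delta> \<le> 55 * q ^ (\<delta> - 1) * H\<^sup>2"
proof -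
  have "0 < (2::real) ^ \<delta>" by simp
  then have "0 < q" using assms(6) by linarith
  define \<alpha> where "\<alpha> = H * s / q"
  define \<epsilon> where "\<epsilon> = \<alpha> + sqrt (real \<delta> * \<alpha>)"
  have "0 \<le> \<alpha>" unfolding \<alpha>_def using assms(3,4) \<open>0 < q\<close> by simp
  have "real \<delta> ^ 3 * \<alpha> \<le> 1"
    unfolding \<alpha>_def using assms(7) \<open>0 < q\<close> by (simp add: field_simps)
  note \<epsilon> = epsilon_bounds[OF \<open>0 \<le> \<alpha>\<close> assms(5) this \<epsilon>_def]
  have "q * \<epsilon> ^ 4 \<le> q * (16 * (real \<delta> * \<alpha>)\<^sup>2)"
    using \<epsilon>(3) \<open>0 < q\<close> by simp
  also have "\<dots> = H\<^sup>2 * (16 * (real \<delta> * s)\<^sup>2) / q"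
    unfolding \<alpha>_def using \<open>0 < q\<close> by (simp add: field_simps power2_eq_square)
  also have "\<dots> \<le> H\<^sup>2 * q / q"
    using assms(8) \<open>0 < q\<close> by (intro divide_right_mono mult_left_mono) auto
  also have "\<dots> = H\<^sup>2" using \<open>0 < q\<close> by simp
  finally have "q * \<epsilon> ^ 4 \<le> H\<^sup>2" .
  have "0 \<le> \<epsilon>" unfolding \<epsilon>_def using \<open>0 \<le> \<alpha>\<close> by simp
  have "moment_of_cumulants \<kappa> \<delta>
      \<le> q ^ \<delta> * (\<epsilon> ^ \<delta> + 2 * H / q * (1 + \<epsilon>) ^ \<delta> + (2 * H / q)\<^sup>2 * (2 + \<epsilon>) ^ \<delta>)"
    using assms(3) \<open>0 < q\<close> \<kappa>_bound unfolding \<alpha>_def[symmetric]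
    by (intro moment_of_cumulants_le_majorant[OF _ \<open>0 \<le> \<alpha>\<close> _ _ \<epsilon>_def \<kappa>_nonneg]
              three_halves_power_bound[OF _ assms(6,9)]) auto
  also have "\<dots> \<le> 55 * q ^ (\<delta> - 1) * H\<^sup>2"
    by (rule majorant_le_large[OF assms(3) \<open>0 \<le> \<epsilon>\<close> \<epsilon>(1,2) assms(5,6) \<open>q * \<epsilon> ^ 4 \<le> H\<^sup>2\<close>])
  finally show ?thesis .
qed

lemma moment_3_le:
  fixes q H s0 s1 s2 :: real
  assumes "0 \<le> H" "0 \<le> s0" "s1 \<le> q * s0" "s2 \<le> 2 * q\<^sup>2"
    and "H * s0\<^sup>2 \<le> 2 ^ 17 * q" "H\<^sup>2 * s0 ^ 3 \<le> q\<^sup>2"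
  shows "(H * s0) ^ 3 + 3 * (H * s0) * (H * s1) + H * s2 \<le> 393219 * q\<^sup>2 * H"
proof -
  have "0 \<le> H * s0\<^sup>2" using assms(1) by simp
  then have "0 \<le> q" using assms(5) by simp
  have "(H * s0) ^ 3 = H * (H\<^sup>2 * s0 ^ 3)"
    by (simp add: power_mult_distrib power2_eq_square power3_eq_cube)
  also have "\<dots> \<le> H * q\<^sup>2" using assms(6,1) by (rule mult_left_mono)
  finally have "(H * s0) ^ 3 \<le> q\<^sup>2 * H" by (simp add: mult.commute)
  moreover have "3 * (H * s0) * (H * s1) \<le> 3 * (H * s0) * (H * (q * s0))"
    using assms(1-3) by (intro mult_left_mono) auto
  moreover have "3 * (H * s0) * (H * (q * s0)) = 3 * q * H * (H * s0\<^sup>2)"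
    by (simp add: power2_eq_square)
  moreover have "3 * q * H * (H * s0\<^sup>2) \<le> 3 * q * H * (2 ^ 17 * q)"
    using assms(1,5) \<open>0 \<le> q\<close> by (intro mult_left_mono) auto
  moreover have "H * s2 \<le> H * (2 * q\<^sup>2)" using assms(4,1) by (rule mult_left_mono)
  ultimately show ?thesis by (simp add: power2_eq_square algebra_simps)
qed

lemma divisor_sigma_cumulant_le:
  fixes H :: real
  assumes "q > 0" "0 \<le> H"
  shows "H * divisor_sigma (real j) q
     \<le> real q ^ Suc j * ((if j \<le> 1 then H * divisor_sigma 0 q / real q else 0) + 2 * H / real q)"
proof -
  consider "j = 0" | "j = 1" | "j \<ge> 2" by linarith
  then show ?thesis
  proof cases
    case 1
    then show ?thesis using assms by (simp add: field_simps)
  next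
    case 2
    have "real q ^ Suc j * ((if j \<le> 1 then H * divisor_sigma 0 q / real q else 0) + 2 * H / real q)
        = real q * (H * divisor_sigma 0 q) + 2 * real q * H"
      using 2 assms by (simp add: field_simps power2_eq_square)
    moreover have "H * divisor_sigma 1 q \<le> H * (real q * divisor_sigma 0 q)"
      using divisor_sigma_1_le[OF assms(1)] assms(2) by (rule mult_left_mono)
    moreover have "0 \<le> 2 * real q * H" using assms by simp
    ultimately show ?thesis using 2 by (simp add: algebra_simps)
  next
    case 3
    have "H * divisor_sigma (real j) q \<le> H * (2 * real q ^ j)"
      using divisor_sigma_of_nat_le[OF assms(1) 3] assms(2) by (rule mult_left_mono)
    then show ?thesis using 3 assms by (simp add: field_simps)
  qed
qed

lemma const_mult_power_le_power:
  fixes x c :: real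
  assumes "2 ^ 24 \<le> x" "c \<le> 2 ^ (24 * k)"
  shows "c * x ^ m \<le> x ^ (m + k)"
proof -
  have "c \<le> x ^ k"
    using assms(2) power_mono[OF assms(1), of k] by (simp add: power_mult)
  then have "c * x ^ m \<le> x ^ k * x ^ m"
    using assms(1) by (intro mult_right_mono) auto
  then show ?thesis by (simp add: power_add mult.commute)
qed

lemma twelfth_root_consequences:
  fixes x H s d :: real
  assumes x: "2 ^ 24 \<le> x" and H: "0 \<le> H" "H \<le> 2 * x ^ 4" and s: "0 \<le> s" "s \<le> 256 * x ^ 4"
    and d: "0 \<le> d" "d \<le> 24 * x"
  shows "H * s\<^sup>2 \<le> 2 ^ 17 * x ^ 12" and "H\<^sup>2 * s ^ 3 \<le> (x ^ 12)\<^sup>2"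
    and "d ^ 3 * (H * s) \<le> x ^ 12" and "16 * (d * s)\<^sup>2 \<le> x ^ 12" and "32 * H ^ 5 \<le> (x ^ 12)\<^sup>2"
proof -
  have "0 \<le> x" by (rule order_trans[OF _ x]) simp
  have s2: "s\<^sup>2 \<le> 2 ^ 16 * x ^ 8" "s ^ 3 \<le> 2 ^ 24 * x ^ 12"
    using power_mono[OF s(2) s(1), of 2] power_mono[OF s(2) s(1), of 3]
    by (simp_all add: power_mult_distrib flip: power_mult)
  have "H * s\<^sup>2 \<le> (2 * x ^ 4) * (2 ^ 16 * x ^ 8)"
    using H s(1) s2 by (intro mult_mono) auto
  then show "H * s\<^sup>2 \<le> 2 ^ 17 * x ^ 12" by (simp flip: power_add)
  have "H\<^sup>2 * s ^ 3 \<le> (2 * x ^ 4)\<^sup>2 * (2 ^ 24 * x ^ 12)"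
    using H s(1) s2 by (intro mult_mono power_mono) auto
  also have "\<dots> = 2 ^ 26 * x ^ 20" by (simp add: power_mult_distrib flip: power_mult power_add)
  also have "\<dots> \<le> x ^ (20 + 4)" using x by (intro const_mult_power_le_power) auto
  finally show "H\<^sup>2 * s ^ 3 \<le> (x ^ 12)\<^sup>2" by (simp flip: power_mult)
  have "d ^ 3 * (H * s) \<le> (24 * x) ^ 3 * ((2 * x ^ 4) * (256 * x ^ 4))"
    using d H s by (intro mult_mono power_mono) auto
  also have "\<dots> = 7077888 * x ^ 11" by (simp add: power_mult_distrib flip: power_add)
  also have "\<dots> \<le> x ^ (11 + 1)" using x by (intro const_mult_power_le_power) auto
  finally show "d ^ 3 * (H * s) \<le> x ^ 12" by simp
  have "16 * (d * s)\<^sup>2 \<le> 16 * ((24 * x) * (256 * x ^ 4))\<^sup>2"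
    using d s by (intro mult_left_mono power_mono mult_mono) auto
  also have "\<dots> = 603979776 * x ^ 10" by (simp add: power_mult_distrib flip: power_add power_mult)
  also have "\<dots> \<le> x ^ (10 + 2)" using x by (intro const_mult_power_le_power) auto
  finally show "16 * (d * s)\<^sup>2 \<le> x ^ 12" by simp
  have "32 * H ^ 5 \<le> 32 * (2 * x ^ 4) ^ 5"
    using H by (intro mult_left_mono power_mono) auto
  also have "\<dots> = 1024 * x ^ 20" by (simp add: power_mult_distrib flip: power_mult)
  also have "\<dots> \<le> x ^ (20 + 4)" using x by (intro const_mult_power_le_power) auto
  finally show "32 * H ^ 5 \<le> (x ^ 12)\<^sup>2" by (simp flip: power_mult)
qed

lemma twelfth_root_bounds:
  fixes q r \<delta> :: nat
  assumes q: "2 ^ 288 \<le> q" and r: "1 \<le> r" "real r \<le> exp (real q powr (1/3))"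
    and \<delta>: "real \<delta> \<le> ln (real q) / ln 2"
  obtains x :: real where "2 ^ 24 \<le> x" "real q = x ^ 12" "harmonic_num r \<le> 2 * x ^ 4"
    "divisor_sigma 0 q \<le> 256 * x ^ 4" "real \<delta> \<le> 24 * x"
proof
  define x where "x = real q powr (1/12)"
  have "q > 0" using q by (simp add: Nat.gr0I)
  then show x12: "real q = x ^ 12"
    unfolding x_def by (simp add: powr_power)
  have "((2::real) ^ 24) ^ Suc 11 \<le> x ^ Suc 11"
    using q x12 by (simp flip: power_mult)
  then show x: "2 ^ 24 \<le> x"
    by (rule power_le_imp_le_base) (simp add: x_def)
  moreover have "(1::real) \<le> 2 ^ 24" by simp
  ultimately have "1 \<le> x" by linarith
  then have "1 \<le> x ^ 4" by simp
  have "ln (real r) \<le> ln (exp (real q powr (1/3)))"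
    using r by (subst ln_le_cancel_iff) auto
  also have "\<dots> = real q powr (1/3)" by simp
  also have "real q powr (1/3) = x ^ 4"
    unfolding x_def using \<open>q > 0\<close> by (simp add: powr_power)
  finally show "harmonic_num r \<le> 2 * x ^ 4"
    using harmonic_num_le_ln[OF r(1)] \<open>1 \<le> x ^ 4\<close> by simp
  have "real (card {d. d dvd q} ^ 3) \<le> real (2 ^ 24 * q)"
    using card_divisors_cube_le_const[OF \<open>q > 0\<close>] by (simp only: of_nat_le_iff)
  then have "divisor_sigma 0 q ^ 3 \<le> 2 ^ 24 * real q"
    unfolding divisor_sigma_0_eq_card[OF \<open>q > 0\<close>] by simp
  also have "\<dots> = (256 * x ^ 4) ^ 3"
    unfolding x12 by (simp add: power_mult_distrib flip: power_mult)
  finally have "divisor_sigma 0 q ^ Suc 2 \<le> (256 * x ^ 4) ^ Suc 2" by simp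
  then show "divisor_sigma 0 q \<le> 256 * x ^ 4"
    by (rule power_le_imp_le_base) (use x in simp_all)
  have "ln (real q) = 12 * ln x"
    using x12 x by (simp add: ln_realpow)
  also have "\<dots> \<le> 12 * x" using ln_le_minus_one[of x] x by simp
  finally have "ln (real q) / ln 2 \<le> 12 * x / (2/3)"
    using ln2_ge_two_thirds x by (intro frac_le) auto
  then show "real \<delta> \<le> 24 * x" using \<delta> by simp
qed

lemma two_power_le_if_le_log:
  fixes q \<delta> :: nat
  assumes "q > 0" "real \<delta> \<le> ln (real q) / ln 2"
  shows "2 ^ \<delta> \<le> real q"
proof -
  have "ln (2 ^ \<delta>) \<le> ln (real q)"
    using assms(2) by (simp add: ln_realpow pos_le_divide_eq)
  then show ?thesis using assms(1) by simp
qed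

lemma parameter_bounds:
  fixes q r \<delta> :: nat
  assumes q: "2 ^ 288 \<le> q" and r: "1 \<le> r" "real r \<le> exp (real q powr (1/3))"
    and \<delta>: "real \<delta> \<le> ln (real q) / ln 2"
  defines "H \<equiv> harmonic_num r" and "s0 \<equiv> divisor_sigma 0 q"
  shows "2 ^ \<delta> \<le> real q" and "H * s0\<^sup>2 \<le> 2 ^ 17 * real q" and "H\<^sup>2 * s0 ^ 3 \<le> (real q)\<^sup>2"
    and "real \<delta> ^ 3 * (H * s0) \<le> real q" and "16 * (real \<delta> * s0)\<^sup>2 \<le> real q"
    and "32 * H ^ 5 \<le> (real q)\<^sup>2"
proof -
  have "q > 0" using q by simp
  then show "2 ^ \<delta> \<le> real q" using \<delta> by (rule two_power_le_if_le_log)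
  have "0 \<le> H" "0 \<le> s0"
    unfolding H_def s0_def using one_le_harmonic_num[OF r(1)] divisor_sigma_nonneg by auto
  obtain x where x: "2 ^ 24 \<le> x" "real q = x ^ 12" "H \<le> 2 * x ^ 4" "s0 \<le> 256 * x ^ 4"
    "real \<delta> \<le> 24 * x"
    using twelfth_root_bounds[OF q r \<delta>] unfolding H_def s0_def by blast
  note bounds = twelfth_root_consequences[OF x(1) \<open>0 \<le> H\<close> x(3) \<open>0 \<le> s0\<close> x(4)
      of_nat_0_le_iff x(5), folded x(2)]
  show "H * s0\<^sup>2 \<le> 2 ^ 17 * real q" "H\<^sup>2 * s0 ^ 3 \<le> (real q)\<^sup>2"
    "real \<delta> ^ 3 * (H * s0) \<le> real q" "16 * (real \<delta> * s0)\<^sup>2 \<le> real q" "32 * H ^ 5 \<le> (real q)\<^sup>2"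
    by (fact bounds)+
qed

lemma moment_of_cumulants_divisor_sigma_le:
  fixes q r \<delta> :: nat
  assumes q: "2 ^ 288 \<le> q" and r: "1 \<le> r" "real r \<le> exp (real q powr (1/3))"
    and \<delta>: "1 \<le> \<delta>" "real \<delta> \<le> ln (real q) / ln 2"
  shows "moment_of_cumulants (\<lambda>j. harmonic_num r * divisor_sigma (real j) q) \<delta>
     \<le> (if \<delta> = 1 then 400000 * divisor_sigma 0 q * harmonic_num r
         else if \<delta> = 2 then 400000 * ((divisor_sigma 0 q)\<^sup>2 * (harmonic_num r)\<^sup>2
                                  + divisor_sigma 1 q * harmonic_num r)
         else if \<delta> = 3 then 400000 * (real q)\<^sup>2 * harmonic_num r
         else 400000 * real q ^ (\<delta> - 1) * (harmonic_num r)\<^sup>2)"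
proof -
  define H where "H = harmonic_num r"
  define s0 where "s0 = divisor_sigma 0 q"
  define \<kappa> where "\<kappa> = (\<lambda>j. H * divisor_sigma (real j) q)"
  have "q > 0" using q by simp
  have "1 \<le> H" "0 \<le> H" "0 \<le> s0"
    unfolding H_def s0_def using one_le_harmonic_num[OF r(1)] divisor_sigma_nonneg by auto
  note bounds = parameter_bounds[OF q r \<delta>(2), folded H_def s0_def]
  consider "\<delta> = 1" | "\<delta> = 2" | "\<delta> = 3" | "\<delta> \<ge> 4" using \<delta>(1) by linarith
  then have "moment_of_cumulants \<kappa> \<delta>
     \<le> (if \<delta> = 1 then 400000 * s0 * H else if \<delta> = 2 then 400000 * (s0\<^sup>2 * H\<^sup>2 + divisor_sigma 1 q * H)
         else if \<delta> = 3 then 400000 * (real q)\<^sup>2 * H else 400000 * real q ^ (\<delta> - 1) * H\<^sup>2)"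
  proof cases
    case 1
    then show ?thesis
      using \<open>0 \<le> H\<close> \<open>0 \<le> s0\<close> by (simp add: moment_of_cumulants_1 \<kappa>_def s0_def)
  next
    case 2
    have "0 \<le> H * divisor_sigma 1 q" using \<open>0 \<le> H\<close> divisor_sigma_nonneg by simp
    then show ?thesis
      using 2 by (simp add: moment_of_cumulants_2 \<kappa>_def s0_def power_mult_distrib)
  next
    case 3
    have "moment_of_cumulants \<kappa> \<delta> \<le> 393219 * (real q)\<^sup>2 * H"
      using 3 moment_3_le[OF \<open>0 \<le> H\<close> \<open>0 \<le> s0\<close> _ _ bounds(2,3)]
        divisor_sigma_1_le[OF \<open>q > 0\<close>] divisor_sigma_of_nat_le[OF \<open>q > 0\<close>, of 2]
      by (simp add: moment_of_cumulants_3 \<kappa>_def s0_def)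
    also have "\<dots> \<le> 400000 * (real q)\<^sup>2 * H"
      using \<open>0 \<le> H\<close> by (intro mult_right_mono) auto
    finally show ?thesis using 3 by simp
  next
    case 4
    have "moment_of_cumulants \<kappa> \<delta> \<le> 55 * real q ^ (\<delta> - 1) * H\<^sup>2"
      using divisor_sigma_nonneg \<open>0 \<le> H\<close> divisor_sigma_cumulant_le[OF \<open>q > 0\<close> \<open>0 \<le> H\<close>]
        bounds(1,4-6) \<open>0 \<le> s0\<close>
      unfolding \<kappa>_def s0_def[symmetric]
      by (intro moment_of_cumulants_large_le[OF _ _ \<open>1 \<le> H\<close> _ 4]) auto
    also have "\<dots> \<le> 400000 * real q ^ (\<delta> - 1) * H\<^sup>2"
      by (intro mult_right_mono) auto
    finally show ?thesis using 4 by simp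
  qed
  then show ?thesis unfolding \<kappa>_def H_def s0_def .
qed

theorem lemma6p1:
  "\<exists>(q0::nat) (C::real). C > 0 \<and>
    (\<forall>(q::nat) (r::nat) (\<delta>::nat) (n::nat).
       q \<ge> q0 \<longrightarrow> 1 \<le> r \<longrightarrow> real r \<le> exp (real q powr (1/3)) \<longrightarrow>
       1 \<le> \<delta> \<longrightarrow> real \<delta> \<le> ln (real q) / ln 2 \<longrightarrow> 0 < n \<longrightarrow>
       (1 / fact n) * (\<Sum>\<pi>\<in>{\<pi>. \<pi> permutes {..<n}}.
            (real (\<Sum>d=1..r. cycle_count n (\<pi> ^^ q) d)) ^ \<delta>)
       \<le> (if \<delta> = 1 then C * divisor_sigma 0 q * harmonic_num r
          else if \<delta> = 2 then C * ((divisor_sigma 0 q)\<^sup>2 * (harmonic_num r)\<^sup>2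
                                   + divisor_sigma 1 q * harmonic_num r)
          else if \<delta> = 3 then C * (real q)\<^sup>2 * harmonic_num r
          else C * real q ^ (\<delta> - 1) * (harmonic_num r)\<^sup>2))"
proof (intro exI[of _ "2 ^ 288 :: nat"] exI[of _ "400000 :: real"] conjI allI impI)
  fix q r \<delta> n :: nat
  assume "2 ^ 288 \<le> q" "1 \<le> r" "real r \<le> exp (real q powr (1/3))"
    and "1 \<le> \<delta>" "real \<delta> \<le> ln (real q) / ln 2" and "0 < n"
  moreover from this have "q > 0" by simp
  ultimately show "(1 / fact n) * (\<Sum>\<pi>\<in>{\<pi>. \<pi> permutes {..<n}}.
            (real (\<Sum>d=1..r. cycle_count n (\<pi> ^^ q) d)) ^ \<delta>)
       \<le> (if \<delta> = 1 then 400000 * divisor_sigma 0 q * harmonic_num r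
          else if \<delta> = 2 then 400000 * ((divisor_sigma 0 q)\<^sup>2 * (harmonic_num r)\<^sup>2
                                   + divisor_sigma 1 q * harmonic_num r)
          else if \<delta> = 3 then 400000 * (real q)\<^sup>2 * harmonic_num r
          else 400000 * real q ^ (\<delta> - 1) * (harmonic_num r)\<^sup>2)"
    by (intro order_trans[OF power_cycle_count_moment_le moment_of_cumulants_divisor_sigma_le])
qed simp

end
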